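(* Let $F,G:[0,T]\to\mathbb{R}^{D\times D}$ be continuous, and let $\Psi(t,s)$ be the transition matrix of $F$. Let $\Sigma_\tau$ solve $\frac{d\Sigma_\tau}{d\tau}=F_\tau\Sigma_\tau+\Sigma_\tau F_\tau^T+G_\tau G_\tau^T$, and let $I\subseteq[0,T]$ be an interval on which $\Sigma_\tau$ is positive definite. Let $R_\tau$ be continuously differentiable and invertible on $I$ with $R_\tau R_\tau^T=\Sigma_\tau$ and $\frac{dR_\tau}{d\tau}=(F_\tau+\tfrac12G_\tau G_\tau^T\Sigma_\tau^{-1})R_\tau$. Take $\lambda=0$: let $\hat\Psi$ be the transition matrix of $\hat F_\tau=F_\tau+\tfrac12G_\tau G_\tau^T\Sigma_\tau^{-1}$, and let $P_{s\tau}$ solve $\frac{dP_{s\tau}}{d\tau}=\hat F_\tau P_{s\tau}+P_{s\tau}\hat F_\tau^T$ with $P_{ss}=0$. Then for all $s,t\in I$, all $u(s)\in\mathbb{R}^D$ and all $\epsilon\in\mathbb{R}^D$, we have $P_{st}=0$ and $$\Psi(t,s)u(s)+[\hat\Psi(t,s)-\Psi(t,s)]R_s\epsilon=\Psi(t,s)u(s)+\Big[\int_s^t\tfrac12\Psi(t,\tau)G_\tau G_\tau^TR_\tau^{-T}\,d\tau\Big]\epsilon.$$ That is, the stochastic generalized-DDIM update $u(t)\sim\mathcal{N}(\Psi(t,s)u(s)+[\hat\Psi(t,s)-\Psi(t,s)]R_s\epsilon,P_{st})$ reduces to the deterministic generalized-DDIM update $u(t)=\Psi(t,s)u(s)+[\int_s^t\tfrac12\Psi(t,\tau)G_\tau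 G_\tau^TR_\tau^{-T}d\tau]\epsilon$.
   Context: The transition matrix $\Psi$ of $F$ satisfies $\partial_t\Psi(t,s)=F_t\Psi(t,s)$ with $\Psi(s,s)=I_D$, and similarly for $\hat\Psi$ with $\hat F$. The vector $\epsilon$ plays the role of the network output $\epsilon_\theta(u(s),s)$. *)

theory Defs
  imports "HOL-Analysis.Analysis"
begin

definition oint :: "real \<Rightarrow> real \<Rightarrow> (real \<Rightarrow> 'a::euclidean_space) \<Rightarrow> 'a" where
  "oint s t f = (if s \<le> t then integral {s..t} f else - integral {t..s} f)"

definition pos_def_mat :: "real^'n^'n \<Rightarrow> bool" where
  "pos_def_mat A \<longleftrightarrow> transpose A = A \<and> (\<forall>x. x \<noteq> 0 \<longrightarrow> x \<bullet> (A *v x) > 0)"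

end

theory Submission
  imports Defs
begin

text \<open>
  Write Fh = F + 1/2 G G^T Sigma^-1 for the probability flow drift. When Sigma = R R^T we have
  Sigma^-1 R = R^-T, so R solves both the homogeneous equation R' = Fh R and the inhomogeneous
  equation R' = F R + 1/2 G G^T R^-T. The first gives Psih(t,s) R_s = R_t; the second, by
  variation of constants, gives R_t - Psi(t,s) R_s = int_s^t Psi(t,tau) 1/2 G G^T R^-T dtau.
  The covariance P_s solves a homogeneous linear equation with P_ss = 0 and therefore vanishes.
  Uniqueness for all these linear matrix equations comes from one Gronwall-type estimate:
  if |Y'| <= L |Y| then exp(-2 L y) |Y(y)|^2 is nonincreasing.
\<close>

lemma bounded_bilinear_matrix_matrix_mult:
  "bounded_bilinear ((**) :: real^'n^'m \<Rightarrow> real^'p^'n \<Rightarrow> real^'p^'m)"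
proof -
  have "(A + B) ** C = A ** C + B ** C" for A B :: "real^'n^'m" and C :: "real^'p^'n"
    by (vector matrix_matrix_mult_def sum.distrib distrib_right)
  then show ?thesis
    unfolding bilinear_conv_bounded_bilinear[symmetric] bilinear_def linear_iff
    by (simp add: matrix_add_ldistrib matrix_scalar_ac scalar_matrix_assoc)
qed

lemmas matrix_mult_add_left = bounded_bilinear.add_left[OF bounded_bilinear_matrix_matrix_mult]
lemmas matrix_mult_diff_left = bounded_bilinear.diff_left[OF bounded_bilinear_matrix_matrix_mult]
lemmas matrix_mult_diff_right = bounded_bilinear.diff_right[OF bounded_bilinear_matrix_matrix_mult]
lemmas matrix_mult_scaleR_left = bounded_bilinear.scaleR_left[OF bounded_bilinear_matrix_matrix_mult]
lemmas matrix_mult_scaleR_right = bounded_bilinear.scaleR_right[OF bounded_bilinear_matrix_matrix_mult]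

lemmas has_vector_derivative_matrix_mult =
  bounded_bilinear.has_vector_derivative[OF bounded_bilinear_matrix_matrix_mult]

lemma continuous_on_matrix_mult [continuous_intros]:
  "continuous_on S f \<Longrightarrow> continuous_on S g \<Longrightarrow>
    continuous_on S (\<lambda>x. (f x :: real^'n^'m) ** (g x :: real^'p^'n))"
  by (rule bounded_bilinear.continuous_on[OF bounded_bilinear_matrix_matrix_mult])

lemma continuous_on_transpose [continuous_intros]:
  "continuous_on S f \<Longrightarrow> continuous_on S (\<lambda>x. transpose (f x :: real^'n^'m))"
  unfolding transpose_def by (intro continuous_on_vec_lambda continuous_on_component)

lemma matrix_inv_right:
  fixes A :: "real^'n^'n"
  assumes "invertible A"
  shows "A ** matrix_inv A = mat 1"
  using someI_ex[OF assms[unfolded invertible_def]] unfolding matrix_inv_def by auto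

lemma matrix_inv_left:
  fixes A :: "real^'n^'n"
  assumes "invertible A"
  shows "matrix_inv A ** A = mat 1"
  using someI_ex[OF assms[unfolded invertible_def]] unfolding matrix_inv_def by auto

lemma matrix_inv_unique_left:
  fixes A X :: "real^'n^'n"
  assumes "invertible A" and "X ** A = mat 1"
  shows "matrix_inv A = X"
  by (metis assms matrix_inv_right matrix_mul_assoc matrix_mul_lid matrix_mul_rid)

lemma matrix_inv_cramer:
  fixes A :: "real^'n^'n"
  assumes "invertible A"
  shows "matrix_inv A = (\<chi> i j. det (\<chi> r c. if c = i then axis j 1 $ r else A $ r $ c) / det A)"
proof -
  have "det A \<noteq> 0"
    using assms invertible_det_nz by blast
  have "A *v (matrix_inv A *v axis j 1) = axis j 1" for j
    by (simp add: matrix_vector_mul_assoc matrix_inv_right[OF assms])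
  then have "matrix_inv A *v axis j 1 = (\<chi> i. det (\<chi> r c. if c = i then axis j 1 $ r else A $ r $ c) / det A)" for j
    using cramer[OF \<open>det A \<noteq> 0\<close>] by blast
  then show ?thesis
    by (simp add: vec_eq_iff matrix_vector_mult_basis column_def)
qed

lemma continuous_on_det [continuous_intros]:
  fixes M :: "'a::topological_space \<Rightarrow> real^'n^'n"
  assumes "continuous_on S M"
  shows "continuous_on S (\<lambda>x. det (M x))"
  unfolding det_def by (intro continuous_intros continuous_on_component assms)

lemma continuous_on_matrix_inv [continuous_intros]:
  fixes M :: "'a::topological_space \<Rightarrow> real^'n^'n"
  assumes M: "continuous_on S M" and inv: "\<And>x. x \<in> S \<Longrightarrow> invertible (M x)"
  shows "continuous_on S (\<lambda>x. matrix_inv (M x))"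
proof -
  have cramer_matrix: "continuous_on S (\<lambda>x. \<chi> r c. if c = i then axis j 1 $ r else M x $ r $ c)" for i j
  proof (intro continuous_on_vec_lambda)
    fix r c
    show "continuous_on S (\<lambda>x. if c = i then axis j 1 $ r else M x $ r $ c)"
      by (cases "c = i") (simp_all add: continuous_on_component M)
  qed
  have "continuous_on S (\<lambda>x. \<chi> i j. det (\<chi> r c. if c = i then axis j 1 $ r else M x $ r $ c) / det (M x))"
    using inv invertible_det_nz
    by (intro continuous_on_vec_lambda continuous_on_divide continuous_on_det[OF cramer_matrix] continuous_on_det[OF M]) auto
  then show ?thesis
    by (rule continuous_on_eq) (simp add: matrix_inv_cramer inv)
qed

lemma matrix_inv_gram_mult:
  fixes R :: "real^'n^'n"
  assumes "invertible R"
  shows "matrix_inv (R ** transpose R) ** R = transpose (matrix_inv R)"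
proof -
  let ?N = "transpose (matrix_inv R)"
  have "?N ** transpose R = mat 1"
    by (simp flip: matrix_transpose_mul add: matrix_inv_right[OF assms])
  then have "(?N ** matrix_inv R) ** (R ** transpose R) = mat 1"
    by (simp add: matrix_mul_assoc flip: matrix_mul_assoc[of ?N] add: matrix_inv_left[OF assms])
  then have "matrix_inv (R ** transpose R) = ?N ** matrix_inv R"
    by (intro matrix_inv_unique_left invertible_mult assms transpose_invertible)
  then show ?thesis
    by (simp flip: matrix_mul_assoc add: matrix_inv_left[OF assms])
qed

lemma norm_derivative_le_imp_zero_right:
  fixes Y Y' :: "real \<Rightarrow> 'a::real_inner"
  assumes "c \<le> x"
    and deriv: "\<And>y. y \<in> {c..x} \<Longrightarrow> (Y has_vector_derivative Y' y) (at y within {c..x})"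
    and bound: "\<And>y. y \<in> {c..x} \<Longrightarrow> norm (Y' y) \<le> L * norm (Y y)"
    and "Y c = 0"
  shows "Y x = 0"
proof -
  define g where "g y = exp (- 2 * L * y) * (Y y \<bullet> Y y)" for y
  define g' where "g' y = 2 * exp (- 2 * L * y) * (Y y \<bullet> Y' y - L * (Y y \<bullet> Y y))" for y
  have "(g has_real_derivative g' y) (at y within {c..x})" if "y \<in> {c..x}" for y
  proof -
    have "((\<lambda>y. Y y \<bullet> Y y) has_real_derivative 2 * (Y y \<bullet> Y' y)) (at y within {c..x})"
      using bounded_bilinear.has_vector_derivative[OF bounded_bilinear_inner deriv[OF that] deriv[OF that]]
      by (simp add: has_real_derivative_iff_has_vector_derivative inner_commute)
    then show ?thesis
      unfolding g_def g'_def by (auto intro!: derivative_eq_intros simp: algebra_simps)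
  qed
  then obtain z where z: "z \<in> {c..x}" and mvt: "g x - g c = g' z * (x - c)"
    using mvt_very_simple[OF \<open>c \<le> x\<close>, of g "\<lambda>y. (*) (g' y)"]
    by (auto simp: has_field_derivative_def)
  have "Y z \<bullet> Y' z \<le> norm (Y z) * norm (Y' z)"
    by (metis Cauchy_Schwarz_ineq2 abs_le_iff)
  also have "\<dots> \<le> L * (Y z \<bullet> Y z)"
    using mult_left_mono[OF bound[OF z] norm_ge_zero]
    by (simp add: power2_norm_eq_inner[symmetric] power2_eq_square mult_ac)
  finally have "g' z \<le> 0"
    by (simp add: g'_def mult_nonneg_nonpos)
  then have "exp (- 2 * L * x) * (Y x \<bullet> Y x) \<le> 0"
    using mvt \<open>c \<le> x\<close> \<open>Y c = 0\<close> by (simp add: g_def mult_nonpos_nonneg)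
  then have "Y x \<bullet> Y x \<le> 0"
    by (simp add: mult_le_0_iff)
  then show ?thesis
    using inner_gt_zero_iff[of "Y x"] by linarith
qed

lemma norm_derivative_le_imp_zero:
  fixes Y Y' :: "real \<Rightarrow> 'a::real_inner"
  assumes deriv: "\<And>y. y \<in> {a..b} \<Longrightarrow> (Y has_vector_derivative Y' y) (at y within {a..b})"
    and bound: "\<And>y. y \<in> {a..b} \<Longrightarrow> norm (Y' y) \<le> L * norm (Y y)"
    and "Y c = 0" and c: "c \<in> {a..b}" and x: "x \<in> {a..b}"
  shows "Y x = 0"
proof (cases "c \<le> x")
  case True
  with c x have sub: "{c..x} \<subseteq> {a..b}"
    by auto
  show ?thesis
    using True \<open>Y c = 0\<close> sub bound has_vector_derivative_within_subset[OF deriv]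
    by (intro norm_derivative_le_imp_zero_right[of c x Y Y' L]) auto
next
  case False
  with c x have sub: "{x..c} \<subseteq> {a..b}"
    by auto
  have "Y (- (- x)) = 0"
  proof (rule norm_derivative_le_imp_zero_right[where Y = "\<lambda>y. Y (- y)" and Y' = "\<lambda>y. - Y' (- y)"])
    fix y
    assume y: "y \<in> {- c..- x}"
    then have "(Y has_vector_derivative Y' (- y)) (at (- y) within uminus ` {- c..- x})"
      using sub has_vector_derivative_within_subset[OF deriv] by auto
    from vector_diff_chain_within[OF has_vector_derivative_minus[OF has_vector_derivative_id] this]
    show "((\<lambda>y. Y (- y)) has_vector_derivative - Y' (- y)) (at y within {- c..- x})"
      by (simp add: o_def)
    show "norm (- Y' (- y)) \<le> L * norm (Y (- y))"
      using bound sub y by auto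
  qed (use False \<open>Y c = 0\<close> in auto)
  then show ?thesis
    by simp
qed

lemma matrix_linear_ode_zero:
  fixes Y :: "real \<Rightarrow> real^'k^'n" and A :: "real \<Rightarrow> real^'n^'n" and B :: "real \<Rightarrow> real^'k^'k"
  assumes A: "continuous_on {a..b} A" and B: "continuous_on {a..b} B"
    and deriv: "\<And>y. y \<in> {a..b} \<Longrightarrow> (Y has_vector_derivative A y ** Y y + Y y ** B y) (at y within {a..b})"
    and "Y c = 0" "c \<in> {a..b}" "x \<in> {a..b}"
  shows "Y x = 0"
proof -
  obtain MA MB where MA: "\<And>y. y \<in> {a..b} \<Longrightarrow> norm (A y) \<le> MA"
    and MB: "\<And>y. y \<in> {a..b} \<Longrightarrow> norm (B y) \<le> MB"
    using compact_imp_bounded[OF compact_continuous_image[OF A compact_Icc]]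
      compact_imp_bounded[OF compact_continuous_image[OF B compact_Icc]]
    unfolding bounded_iff by (metis imageI)
  obtain K1 K2 where K1: "\<And>M N. norm ((M :: real^'n^'n) ** (N :: real^'k^'n)) \<le> norm M * norm N * K1"
    and K2: "\<And>M N. norm ((M :: real^'k^'n) ** (N :: real^'k^'k)) \<le> norm M * norm N * K2"
    and "K1 \<ge> 0" "K2 \<ge> 0"
    using bounded_bilinear.nonneg_bounded[OF bounded_bilinear_matrix_matrix_mult] by metis
  show ?thesis
  proof (rule norm_derivative_le_imp_zero[OF deriv _ assms(4-6)])
    fix y
    assume y: "y \<in> {a..b}"
    have "norm (A y ** Y y + Y y ** B y) \<le> norm (A y) * norm (Y y) * K1 + norm (Y y) * norm (B y) * K2"
      using norm_triangle_le K1 K2 add_mono by blast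
    also have "\<dots> \<le> MA * norm (Y y) * K1 + norm (Y y) * MB * K2"
      using MA[OF y] MB[OF y] \<open>K1 \<ge> 0\<close> \<open>K2 \<ge> 0\<close>
      by (intro add_mono mult_right_mono mult_left_mono) auto
    finally show "norm (A y ** Y y + Y y ** B y) \<le> (MA * K1 + MB * K2) * norm (Y y)"
      by (simp add: algebra_simps)
  qed
qed

lemma has_vector_derivative_imp_continuous_on:
  "(\<And>x. x \<in> S \<Longrightarrow> (f has_vector_derivative f' x) (at x within S)) \<Longrightarrow> continuous_on S f"
  using has_vector_derivative_continuous continuous_on_eq_continuous_within by blast

lemma is_interval_min_max_subset:
  fixes I :: "real set"
  assumes "is_interval I" and "s \<in> I" and "t \<in> I"
  shows "{min s t..max s t} \<subseteq> I"
proof -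
  have "min s t \<in> I" and "max s t \<in> I"
    using assms by (simp_all add: min_def max_def)
  then show ?thesis
    using assms(1) unfolding is_interval_1 by (meson atLeastAtMost_iff subsetI)
qed

lemma oint_eq_integral_diff:
  fixes f :: "real \<Rightarrow> 'a::euclidean_space"
  assumes "f integrable_on {a..b}" and "s \<in> {a..b}" and "t \<in> {a..b}"
  shows "oint s t f = integral {a..t} f - integral {a..s} f"
proof (cases "s \<le> t")
  case True
  then have "integral {a..s} f + integral {s..t} f = integral {a..t} f"
    using assms by (intro Henstock_Kurzweil_Integration.integral_combine integrable_on_subinterval[OF assms(1)]) auto
  then show ?thesis
    using True by (simp add: oint_def algebra_simps)
next
  case False
  then have "integral {a..t} f + integral {t..s} f = integral {a..s} f"
    using assms by (intro Henstock_Kurzweil_Integration.integral_combine integrable_on_subinterval[OF assms(1)]) auto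
  then show ?thesis
    using False by (simp add: oint_def algebra_simps)
qed

lemma oint_same [simp]: "oint s s f = 0"
  by (simp add: oint_def)

lemma oint_has_vector_derivative:
  fixes f :: "real \<Rightarrow> 'a::euclidean_space"
  assumes f: "continuous_on {a..b} f" and "s \<in> {a..b}" and "t \<in> {a..b}"
  shows "((\<lambda>t. oint s t f) has_vector_derivative f t) (at t within {a..b})"
proof -
  have "((\<lambda>t. integral {a..t} f - integral {a..s} f) has_vector_derivative f t) (at t within {a..b})"
    using integral_has_vector_derivative[OF f \<open>t \<in> {a..b}\<close>] by (auto intro: derivative_eq_intros)
  then show ?thesis
    by (rule has_vector_derivative_transform[OF \<open>t \<in> {a..b}\<close>, rotated])
      (use oint_eq_integral_diff[OF integrable_continuous_interval[OF f] \<open>s \<in> {a..b}\<close>] in blast)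
qed

lemma oint_linear:
  fixes f :: "real \<Rightarrow> 'a::euclidean_space" and h :: "'a \<Rightarrow> 'b::euclidean_space"
  assumes "f integrable_on {min s t..max s t}" and "bounded_linear h"
  shows "oint s t (\<lambda>\<tau>. h (f \<tau>)) = h (oint s t f)"
  using assms integral_linear[of f _ h] linear_neg[OF bounded_linear.linear[OF \<open>bounded_linear h\<close>]]
  by (auto simp: oint_def o_def min_def max_def split: if_splits)

lemma oint_cong:
  assumes "\<And>\<tau>. \<tau> \<in> {min s t..max s t} \<Longrightarrow> f \<tau> = g \<tau>"
  shows "oint s t f = oint s t g"
  using assms integral_cong[of "{s..t}" f g] integral_cong[of "{t..s}" f g]
  by (auto simp: oint_def min_def max_def)

definition transition_matrix ::
    "real set \<Rightarrow> (real \<Rightarrow> real^'n^'n) \<Rightarrow> (real \<Rightarrow> real \<Rightarrow> real^'n^'n) \<Rightarrow> bool"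
  where "transition_matrix S F \<Psi> \<longleftrightarrow>
    (\<forall>s\<in>S. \<Psi> s s = mat 1 \<and>
      (\<forall>t\<in>S. ((\<lambda>t. \<Psi> t s) has_vector_derivative F t ** \<Psi> t s) (at t within S)))"

lemma transition_matrix_subset:
  "transition_matrix S F \<Psi> \<Longrightarrow> T \<subseteq> S \<Longrightarrow> transition_matrix T F \<Psi>"
  unfolding transition_matrix_def by (meson has_vector_derivative_within_subset subsetD)

lemma transition_matrix_solution:
  fixes Y :: "real \<Rightarrow> real^'k^'n"
  assumes \<Psi>: "transition_matrix {a..b} F \<Psi>" and F: "continuous_on {a..b} F"
    and Y: "\<And>y. y \<in> {a..b} \<Longrightarrow> (Y has_vector_derivative F y ** Y y) (at y within {a..b})"
    and s: "s \<in> {a..b}" and t: "t \<in> {a..b}"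
  shows "Y t = \<Psi> t s ** Y s"
proof -
  have "Y t - \<Psi> t s ** Y s = 0"
  proof (rule matrix_linear_ode_zero[where B = "\<lambda>_. 0" and c = s, OF F continuous_on_const _ _ s t])
    fix y
    assume y: "y \<in> {a..b}"
    have "((\<lambda>x. \<Psi> x s) has_vector_derivative F y ** \<Psi> y s) (at y within {a..b})"
      using \<Psi> s y by (simp add: transition_matrix_def)
    from has_vector_derivative_matrix_mult[OF this has_vector_derivative_const[of "Y s"]]
    have "((\<lambda>x. \<Psi> x s ** Y s) has_vector_derivative (F y ** \<Psi> y s) ** Y s) (at y within {a..b})"
      by simp
    from has_vector_derivative_diff[OF Y[OF y] this]
    show "((\<lambda>x. Y x - \<Psi> x s ** Y s) has_vector_derivative
        F y ** (Y y - \<Psi> y s ** Y s) + (Y y - \<Psi> y s ** Y s) ** 0) (at y within {a..b})"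
      by (simp add: matrix_mult_diff_right matrix_mul_assoc)
  qed (use \<Psi> s in \<open>simp add: transition_matrix_def\<close>)
  then show ?thesis
    by simp
qed

lemma transition_matrix_mult:
  assumes "transition_matrix {a..b} F \<Psi>" and "continuous_on {a..b} F"
    and "t \<in> {a..b}" and "\<sigma> \<in> {a..b}" and "r \<in> {a..b}"
  shows "\<Psi> t \<sigma> ** \<Psi> \<sigma> r = \<Psi> t r"
  using assms transition_matrix_solution[of a b F \<Psi> "\<lambda>x. \<Psi> x r" \<sigma> t]
  by (simp add: transition_matrix_def)

lemma transition_matrix_inverse:
  assumes "transition_matrix {a..b} F \<Psi>" and "continuous_on {a..b} F"
    and "t \<in> {a..b}" and "s \<in> {a..b}"
  shows "invertible (\<Psi> t s)" and "matrix_inv (\<Psi> t s) = \<Psi> s t"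
proof -
  have left_inverse: "\<Psi> s t ** \<Psi> t s = mat 1"
    using assms transition_matrix_mult[OF assms(1,2)] by (simp add: transition_matrix_def)
  then show "invertible (\<Psi> t s)"
    using invertible_left_inverse by blast
  then show "matrix_inv (\<Psi> t s) = \<Psi> s t"
    using left_inverse by (rule matrix_inv_unique_left)
qed

lemma continuous_on_transition_matrix:
  assumes "transition_matrix S F \<Psi>" and "s \<in> S"
  shows "continuous_on S (\<lambda>t. \<Psi> t s)"
  using assms unfolding transition_matrix_def
  by (intro has_vector_derivative_imp_continuous_on[where f' = "\<lambda>t. F t ** \<Psi> t s"]) blast

lemma continuous_on_transition_matrix_initial:
  assumes \<Psi>: "transition_matrix {a..b} F \<Psi>" and F: "continuous_on {a..b} F" and "s \<in> {a..b}"
  shows "continuous_on {a..b} (\<lambda>\<tau>. \<Psi> s \<tau>)"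
proof -
  have "continuous_on {a..b} (\<lambda>\<tau>. matrix_inv (\<Psi> \<tau> s))"
    using assms transition_matrix_inverse[OF \<Psi> F]
    by (intro continuous_on_matrix_inv continuous_on_transition_matrix[OF \<Psi>])
  then show ?thesis
    by (rule continuous_on_eq) (use assms transition_matrix_inverse in blast)
qed

lemma transition_matrix_variation_of_constants:
  fixes K H :: "real \<Rightarrow> real^'k^'n"
  assumes \<Psi>: "transition_matrix {a..b} F \<Psi>" and F: "continuous_on {a..b} F"
    and H: "continuous_on {a..b} H"
    and K: "\<And>y. y \<in> {a..b} \<Longrightarrow> (K has_vector_derivative F y ** K y + H y) (at y within {a..b})"
    and s: "s \<in> {a..b}" and t: "t \<in> {a..b}"
  shows "K t = \<Psi> t s ** K s + oint s t (\<lambda>\<tau>. \<Psi> t \<tau> ** H \<tau>)"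
proof -
  define Q where "Q \<tau> = \<Psi> s \<tau> ** H \<tau>" for \<tau>
  have Q: "continuous_on {a..b} Q"
    unfolding Q_def by (intro continuous_intros continuous_on_transition_matrix_initial[OF \<Psi> F s] H)
  have "(\<lambda>x. K x - \<Psi> x s ** oint s x Q) t = \<Psi> t s ** (K s - \<Psi> s s ** oint s s Q)"
  proof (rule transition_matrix_solution[OF \<Psi> F _ s t])
    fix y
    assume y: "y \<in> {a..b}"
    have "((\<lambda>x. \<Psi> x s) has_vector_derivative F y ** \<Psi> y s) (at y within {a..b})"
      using \<Psi> s y by (simp add: transition_matrix_def)
    from has_vector_derivative_matrix_mult[OF this oint_has_vector_derivative[OF Q s y]]
    have "((\<lambda>x. \<Psi> x s ** oint s x Q) has_vector_derivative
        F y ** (\<Psi> y s ** oint s y Q) + H y) (at y within {a..b})"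
      using transition_matrix_mult[OF \<Psi> F y s y] \<Psi> y
      by (simp add: Q_def matrix_mul_assoc transition_matrix_def add.commute)
    from has_vector_derivative_diff[OF K[OF y] this]
    show "((\<lambda>x. K x - \<Psi> x s ** oint s x Q) has_vector_derivative
        F y ** (K y - \<Psi> y s ** oint s y Q)) (at y within {a..b})"
      by (simp add: matrix_mult_diff_right)
  qed
  then have "K t = \<Psi> t s ** K s + \<Psi> t s ** oint s t Q"
    using \<Psi> s by (simp add: transition_matrix_def diff_eq_eq)
  also have "\<Psi> t s ** oint s t Q = oint s t (\<lambda>\<tau>. \<Psi> t s ** Q \<tau>)"
  proof (rule oint_linear[symmetric])
    show "Q integrable_on {min s t..max s t}"
      using s t by (intro integrable_continuous_interval continuous_on_subset[OF Q]) auto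
  qed (rule bounded_bilinear.bounded_linear_right[OF bounded_bilinear_matrix_matrix_mult])
  also have "\<dots> = oint s t (\<lambda>\<tau>. \<Psi> t \<tau> ** H \<tau>)"
  proof (rule oint_cong)
    fix \<tau>
    assume "\<tau> \<in> {min s t..max s t}"
    then have "\<tau> \<in> {a..b}"
      using s t by auto
    then show "\<Psi> t s ** Q \<tau> = \<Psi> t \<tau> ** H \<tau>"
      using transition_matrix_mult[OF \<Psi> F t s] by (simp add: Q_def matrix_mul_assoc)
  qed
  finally show ?thesis .
qed


definition probability_flow_drift ::
    "(real \<Rightarrow> real^'n^'n) \<Rightarrow> (real \<Rightarrow> real^'n^'n) \<Rightarrow> (real \<Rightarrow> real^'n^'n) \<Rightarrow> real \<Rightarrow> real^'n^'n"
  where "probability_flow_drift F G \<Sigma> \<tau> =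
    F \<tau> + (1/2) *\<^sub>R (G \<tau> ** transpose (G \<tau>) ** matrix_inv (\<Sigma> \<tau>))"

lemma continuous_on_probability_flow_drift:
  fixes F G R \<Sigma> :: "real \<Rightarrow> real^'n^'n"
  assumes "continuous_on S F" and "continuous_on S G" and R: "continuous_on S R"
    and "\<And>\<tau>. \<tau> \<in> S \<Longrightarrow> invertible (R \<tau>)"
    and \<Sigma>: "\<And>\<tau>. \<tau> \<in> S \<Longrightarrow> R \<tau> ** transpose (R \<tau>) = \<Sigma> \<tau>"
  shows "continuous_on S (probability_flow_drift F G \<Sigma>)"
proof -
  have "continuous_on S \<Sigma>"
    using continuous_on_matrix_mult[OF R continuous_on_transpose[OF R]]
    by (rule continuous_on_eq) (simp add: \<Sigma>)
  moreover have "invertible (\<Sigma> \<tau>)" if "\<tau> \<in> S" for \<tau>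
    using assms that by (metis invertible_mult transpose_invertible)
  ultimately show ?thesis
    unfolding probability_flow_drift_def using assms by (intro continuous_intros)
qed

lemma probability_flow_drift_mult_square_root:
  fixes F G R \<Sigma> :: "real \<Rightarrow> real^'n^'n"
  assumes "invertible (R \<tau>)" and "R \<tau> ** transpose (R \<tau>) = \<Sigma> \<tau>"
  shows "probability_flow_drift F G \<Sigma> \<tau> ** R \<tau> =
    F \<tau> ** R \<tau> + (1/2) *\<^sub>R (G \<tau> ** transpose (G \<tau>) ** transpose (matrix_inv (R \<tau>)))"
  using matrix_inv_gram_mult[OF assms(1)] assms(2)
  by (simp add: probability_flow_drift_def matrix_mult_add_left matrix_mult_scaleR_left flip: matrix_mul_assoc)

lemma probability_flow_transition_square_root:
  fixes F G R \<Sigma> :: "real \<Rightarrow> real^'n^'n"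
  assumes \<Psi>: "transition_matrix {a..b} F \<Psi>"
    and \<Psi>h: "transition_matrix {a..b} (probability_flow_drift F G \<Sigma>) \<Psi>h"
    and F: "continuous_on {a..b} F" and G: "continuous_on {a..b} G" and R: "continuous_on {a..b} R"
    and R_inv: "\<And>\<tau>. \<tau> \<in> {a..b} \<Longrightarrow> invertible (R \<tau>)"
    and R_sq: "\<And>\<tau>. \<tau> \<in> {a..b} \<Longrightarrow> R \<tau> ** transpose (R \<tau>) = \<Sigma> \<tau>"
    and R_deriv: "\<And>\<tau>. \<tau> \<in> {a..b} \<Longrightarrow>
      (R has_vector_derivative probability_flow_drift F G \<Sigma> \<tau> ** R \<tau>) (at \<tau> within {a..b})"
    and s: "s \<in> {a..b}" and t: "t \<in> {a..b}"
  shows "(\<Psi>h t s - \<Psi> t s) ** R s =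
    oint s t (\<lambda>\<tau>. (1/2) *\<^sub>R (\<Psi> t \<tau> ** G \<tau> ** transpose (G \<tau>) ** transpose (matrix_inv (R \<tau>))))"
proof -
  define H where "H \<tau> = (1/2) *\<^sub>R (G \<tau> ** transpose (G \<tau>) ** transpose (matrix_inv (R \<tau>)))" for \<tau>
  have "\<Psi>h t s ** R s = R t"
    using continuous_on_probability_flow_drift[OF F G R R_inv R_sq]
    by (rule transition_matrix_solution[OF \<Psi>h _ R_deriv s t, symmetric])
  moreover have "R t = \<Psi> t s ** R s + oint s t (\<lambda>\<tau>. \<Psi> t \<tau> ** H \<tau>)"
  proof (rule transition_matrix_variation_of_constants[OF \<Psi> F _ _ s t])
    show "continuous_on {a..b} H"
      unfolding H_def by (intro continuous_intros G R R_inv)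
    show "(R has_vector_derivative F \<tau> ** R \<tau> + H \<tau>) (at \<tau> within {a..b})" if "\<tau> \<in> {a..b}" for \<tau>
      using R_deriv[OF that] probability_flow_drift_mult_square_root[where R = R and \<Sigma> = \<Sigma> and \<tau> = \<tau>,
          OF R_inv[OF that] R_sq[OF that]]
      by (simp add: H_def)
  qed
  moreover have "\<Psi> t \<tau> ** H \<tau> =
      (1/2) *\<^sub>R (\<Psi> t \<tau> ** G \<tau> ** transpose (G \<tau>) ** transpose (matrix_inv (R \<tau>)))" for \<tau>
    by (simp add: H_def matrix_mult_scaleR_right matrix_mul_assoc)
  ultimately show ?thesis
    by (simp add: matrix_mult_diff_left)
qed

lemma probability_flow_covariance_zero:
  fixes F G R \<Sigma> P :: "real \<Rightarrow> real^'n^'n"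
  assumes F: "continuous_on {a..b} F" and G: "continuous_on {a..b} G" and R: "continuous_on {a..b} R"
    and R_inv: "\<And>\<tau>. \<tau> \<in> {a..b} \<Longrightarrow> invertible (R \<tau>)"
    and R_sq: "\<And>\<tau>. \<tau> \<in> {a..b} \<Longrightarrow> R \<tau> ** transpose (R \<tau>) = \<Sigma> \<tau>"
    and P_deriv: "\<And>\<tau>. \<tau> \<in> {a..b} \<Longrightarrow> (P has_vector_derivative
      probability_flow_drift F G \<Sigma> \<tau> ** P \<tau> + P \<tau> ** transpose (probability_flow_drift F G \<Sigma> \<tau>))
      (at \<tau> within {a..b})"
    and "P s = 0" and "s \<in> {a..b}" and "t \<in> {a..b}"
  shows "P t = 0"
proof -
  have "continuous_on {a..b} (probability_flow_drift F G \<Sigma>)"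
    using F G R R_inv R_sq by (rule continuous_on_probability_flow_drift)
  from matrix_linear_ode_zero[OF this continuous_on_transpose[OF this] P_deriv assms(7-9)]
  show ?thesis .
qed

theorem proposition7:
  fixes F G \<Sigma> R :: "real \<Rightarrow> real^'n^'n"
    and \<Psi> \<Psi>h P :: "real \<Rightarrow> real \<Rightarrow> real^'n^'n"
    and T :: real and I :: "real set"
    and s t :: real and u \<epsilon> :: "real^'n"
  assumes contF: "continuous_on {0..T} F"
    and contG: "continuous_on {0..T} G"
    and Psi_deriv: "\<forall>s\<in>{0..T}. \<forall>t\<in>{0..T}.
          ((\<lambda>t. \<Psi> t s) has_vector_derivative (F t ** \<Psi> t s)) (at t within {0..T})"
    and Psi_init: "\<forall>s\<in>{0..T}. \<Psi> s s = mat 1"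
    and Sigma_deriv: "\<forall>\<tau>\<in>{0..T}. (\<Sigma> has_vector_derivative
          (F \<tau> ** \<Sigma> \<tau> + \<Sigma> \<tau> ** transpose (F \<tau>) + G \<tau> ** transpose (G \<tau>))) (at \<tau> within {0..T})"
    and I_interval: "is_interval I" and I_sub: "I \<subseteq> {0..T}"
    and Sigma_pd: "\<forall>\<tau>\<in>I. pos_def_mat (\<Sigma> \<tau>)"
    and R_inv: "\<forall>\<tau>\<in>I. invertible (R \<tau>)"
    and R_sq: "\<forall>\<tau>\<in>I. R \<tau> ** transpose (R \<tau>) = \<Sigma> \<tau>"
    and R_deriv: "\<forall>\<tau>\<in>I. (R has_vector_derivative
          ((F \<tau> + (1/2) *\<^sub>R (G \<tau> ** transpose (G \<tau>) ** matrix_inv (\<Sigma> \<tau>))) ** R \<tau>)) (at \<tau> within I)"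
    and Psih_deriv: "\<forall>s\<in>I. \<forall>t\<in>I.
          ((\<lambda>t. \<Psi>h t s) has_vector_derivative
            ((F t + (1/2) *\<^sub>R (G t ** transpose (G t) ** matrix_inv (\<Sigma> t))) ** \<Psi>h t s)) (at t within I)"
    and Psih_init: "\<forall>s\<in>I. \<Psi>h s s = mat 1"
    and P_deriv: "\<forall>s\<in>I. \<forall>\<tau>\<in>I.
          ((\<lambda>\<tau>. P s \<tau>) has_vector_derivative
            ((F \<tau> + (1/2) *\<^sub>R (G \<tau> ** transpose (G \<tau>) ** matrix_inv (\<Sigma> \<tau>))) ** P s \<tau>
             + P s \<tau> ** transpose (F \<tau> + (1/2) *\<^sub>R (G \<tau> ** transpose (G \<tau>) ** matrix_inv (\<Sigma> \<tau>)))))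
            (at \<tau> within I)"
    and P_init: "\<forall>s\<in>I. P s s = 0"
    and s_in: "s \<in> I" and t_in: "t \<in> I"
  shows "P s t = 0 \<and>
    \<Psi> t s *v u + (\<Psi>h t s - \<Psi> t s) *v (R s *v \<epsilon>)
    = \<Psi> t s *v u + oint s t (\<lambda>\<tau>. (1/2) *\<^sub>R (\<Psi> t \<tau> ** G \<tau> ** transpose (G \<tau>) ** transpose (matrix_inv (R \<tau>)))) *v \<epsilon>"
proof -
  define a b where "a = min s t" and "b = max s t"
  have s: "s \<in> {a..b}" and t: "t \<in> {a..b}"
    by (auto simp: a_def b_def)
  have ab_I: "{a..b} \<subseteq> I"
    unfolding a_def b_def using I_interval s_in t_in by (rule is_interval_min_max_subset)
  then have ab_T: "{a..b} \<subseteq> {0..T}"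
    using I_sub by blast
  have R_cont: "continuous_on {a..b} R"
    using has_vector_derivative_imp_continuous_on[OF R_deriv[rule_format]] ab_I by (rule continuous_on_subset)
  have F_cont: "continuous_on {a..b} F" and G_cont: "continuous_on {a..b} G"
    using contF contG ab_T by (meson continuous_on_subset)+
  have R_inv_ab: "invertible (R \<tau>)" and R_sq_ab: "R \<tau> ** transpose (R \<tau>) = \<Sigma> \<tau>"
    and R_deriv_ab: "(R has_vector_derivative probability_flow_drift F G \<Sigma> \<tau> ** R \<tau>) (at \<tau> within {a..b})"
    and P_deriv_ab: "(P s has_vector_derivative probability_flow_drift F G \<Sigma> \<tau> ** P s \<tau>
      + P s \<tau> ** transpose (probability_flow_drift F G \<Sigma> \<tau>)) (at \<tau> within {a..b})"
    if "\<tau> \<in> {a..b}" for \<tau>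
    using R_inv R_sq R_deriv P_deriv s_in ab_I that unfolding probability_flow_drift_def
    by (meson has_vector_derivative_within_subset subsetD)+
  have "transition_matrix {0..T} F \<Psi>" and "transition_matrix I (probability_flow_drift F G \<Sigma>) \<Psi>h"
    using Psi_deriv Psi_init Psih_deriv Psih_init
    unfolding transition_matrix_def probability_flow_drift_def by blast+
  then have "(\<Psi>h t s - \<Psi> t s) ** R s =
      oint s t (\<lambda>\<tau>. (1/2) *\<^sub>R (\<Psi> t \<tau> ** G \<tau> ** transpose (G \<tau>) ** transpose (matrix_inv (R \<tau>))))"
    using transition_matrix_subset ab_T ab_I
    by (intro probability_flow_transition_square_root[OF _ _ F_cont G_cont R_cont R_inv_ab R_sq_ab R_deriv_ab s t])
      blast+
  moreover have "P s t = 0"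
    using F_cont G_cont R_cont R_inv_ab R_sq_ab P_deriv_ab P_init[rule_format, OF s_in] s t
    by (rule probability_flow_covariance_zero)
  ultimately show ?thesis
    by (simp add: matrix_vector_mul_assoc)
qed

end
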